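(* Consider, for $x\ge0$, the planar system $$\dot x=1,\qquad \dot y=-ay-\sin\!\left[\pi x\left(1+\tfrac12\lambda\right)\right],$$ with $\lambda=\operatorname{sign}(y)$ for $y\ne0$ and $\lambda\in(-1,1)$ on $y=0$. For all $a>0$ there exist solutions that start in $S_+=\{y>0\}$ and whose evolution is constrained to $\overline S_-=\{y\le0\}$ for all $x>x_{T_a}$, where $x_{T_a}$ denotes the smallest $x$ at which they hit the switching line $y=0$. Moreover, these solutions coincide with the periodic solution $y_d$ described below for $x\ge 4n$, for some $n\in\mathbb{N}$.
   Context: For $y>0$ the system is $\dot y=-ay-\sin(3\pi x/2)$ and for $y<0$ it is $\dot y=-ay-\sin(\pi x/2)$. The sliding manifold is $\Lambda^N=\{(x,0):x\in(\frac{2n}{3},2n),\ n\ge1\}$; a solution may remain on $y=0$ (with $\dot x=1$) over an interval only while on $\Lambda^N$. The function $y_d$ is the sliding $4$-periodic solution lying in $\{y\le0\}$ with $y_d(x)<0$ for $x\in(4n,4n+x_a)$ and $y_d(x)=0$ for $x\in\{0\}\cup[4n+x_a,4(n+1)]$, $n\in\mathbb{N}$, where $x_a\in(2,4)$ is the first positive return to $y=0$ of the solution of $\dot y=-ay-\sin(\pi x/2)$, $y(0)=0$. *)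

theory Defs
  imports "HOL-Analysis.Analysis"
begin

definition rhs :: "real \<Rightarrow> real \<Rightarrow> real \<Rightarrow> real set" where
  "rhs a x y = {- a * y - sin (pi * x * (1 + l / 2)) | l.
      (y \<noteq> 0 \<and> l = sgn y) \<or> (y = 0 \<and> -1 < l \<and> l < 1)}"

definition is_solution :: "real \<Rightarrow> real \<Rightarrow> (real \<Rightarrow> real) \<Rightarrow> bool" where
  "is_solution a x0 y \<longleftrightarrow>
     (\<exists>g N. negligible N \<and>
        (\<forall>x\<ge>x0. g integrable_on {x0..x} \<and> y x = y x0 + integral {x0..x} g) \<and>
        (\<forall>t\<in>{x0..} - N. g t \<in> rhs a t (y t)))"

definition zsol :: "real \<Rightarrow> real \<Rightarrow> real" where
  "zsol a = (THE z. z 0 = 0 \<and>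
      (\<forall>x. (z has_real_derivative (- a * z x - sin (pi * x / 2))) (at x)))"

definition x_a :: "real \<Rightarrow> real" where
  "x_a a = Inf {x. x > 0 \<and> zsol a x = 0}"

definition y_d :: "real \<Rightarrow> real \<Rightarrow> real" where
  "y_d a x = (let r = x - 4 * of_int \<lfloor>x / 4\<rfloor> in if r < x_a a then zsol a r else 0)"

end

theory Submission
  imports Defs
begin

(* A solution starting above the switching line is obtained by solving
   y' = -a y - sin (3 pi x / 2) backwards from (3, 0): with the integrating factor exp (a x),
   positivity of the forcing on (8/3, 3) keeps it positive on [8/3, 3). Every point (x, 0)
   with x > 2/3 admits the sliding velocity 0, so the solution can slide along y = 0 from
   x = 3 to x = 4, where y_d leaves the line. The function y_d is the 4-periodic extension of
   zsol cut off at its first positive zero x_a, which lies in (2, 4) because zsol is negative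
   on (0, 2] and positive at 4; away from the points 4k and 4k + x_a it solves the system
   classically. *)

section \<open>The linear equation y' = -a y - f x\<close>

lemma integrating_factor_has_derivative:
  assumes "(y has_real_derivative - a * y x - f) (at x)"
  shows "((\<lambda>x. exp (a * x) * y x) has_real_derivative - exp (a * x) * f) (at x)"
proof -
  have "((\<lambda>x. exp (a * x) * y x) has_real_derivative
      exp (a * x) * a * y x + exp (a * x) * (- a * y x - f)) (at x)"
    using assms by (auto intro!: derivative_eq_intros)
  then show ?thesis by (simp add: algebra_simps)
qed

lemma linear_ode_unique:
  assumes "\<And>x. (y has_real_derivative - a * y x - f x) (at x)"
    and "\<And>x. (z has_real_derivative - a * z x - f x) (at x)"
    and "y x0 = z x0"
  shows "y = z"
proof -
  have "((\<lambda>x. y x - z x) has_real_derivative - a * (y x - z x) - 0) (at x)" for x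
    using DERIV_diff[OF assms(1,2)] by (simp add: algebra_simps)
  then have "((\<lambda>x. exp (a * x) * (y x - z x)) has_real_derivative 0) (at x)" for x
    using integrating_factor_has_derivative by fastforce
  then have "exp (a * x) * (y x - z x) = exp (a * x0) * (y x0 - z x0)" for x
    by (rule DERIV_isconst_all[rule_format])
  then show ?thesis using assms(3) by (simp add: fun_eq_iff)
qed

lemma integrating_factor_decreasing:
  assumes "s < t"
    and "\<And>x. (y has_real_derivative - a * y x - f x) (at x)"
    and "\<And>x. s < x \<Longrightarrow> x < t \<Longrightarrow> 0 < f x"
  shows "exp (a * t) * y t < exp (a * s) * y s"
proof (rule DERIV_neg_imp_decreasing_open[OF \<open>s < t\<close>])
  fix x assume "s < x" "x < t"
  then show "\<exists>D. ((\<lambda>x. exp (a * x) * y x) has_real_derivative D) (at x) \<and> D < 0"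
    using integrating_factor_has_derivative[OF assms(2)] assms(3) by fastforce
next
  show "continuous_on {s..t} (\<lambda>x. exp (a * x) * y x)"
    using integrating_factor_has_derivative[OF assms(2)]
    by (meson DERIV_isCont continuous_at_imp_continuous_on)
qed

(* Particular solution (b cos (b x) - a sin (b x)) / (a^2 + b^2), corrected by a multiple of
   exp (- a x) so that it vanishes at x0. *)
definition forced_sol :: "real \<Rightarrow> real \<Rightarrow> real \<Rightarrow> real \<Rightarrow> real" where
  "forced_sol a b x0 x =
     ((b * cos (b * x) - a * sin (b * x))
       - (b * cos (b * x0) - a * sin (b * x0)) * exp (a * (x0 - x))) / (a\<^sup>2 + b\<^sup>2)"

lemma forced_sol_initial [simp]: "forced_sol a b x0 x0 = 0"
  by (simp add: forced_sol_def)

lemma forced_sol_has_derivative: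
  assumes "a \<noteq> 0 \<or> b \<noteq> 0"
  shows "(forced_sol a b x0 has_real_derivative - a * forced_sol a b x0 x - sin (b * x)) (at x)"
proof -
  have D: "a\<^sup>2 + b\<^sup>2 \<noteq> 0" using assms by simp
  define c where "c = b * cos (b * x0) - a * sin (b * x0)"
  have "((\<lambda>x. (b * cos (b * x) - a * sin (b * x)) - c * exp (a * (x0 - x))) has_real_derivative
      (- b * b * sin (b * x) - a * b * cos (b * x)) + a * c * exp (a * (x0 - x))) (at x)"
    by (auto intro!: derivative_eq_intros simp: algebra_simps)
  then have "(forced_sol a b x0 has_real_derivative
      ((- b * b * sin (b * x) - a * b * cos (b * x)) + a * c * exp (a * (x0 - x))) / (a\<^sup>2 + b\<^sup>2)) (at x)"
    unfolding forced_sol_def[abs_def] c_def[symmetric] by (rule DERIV_cdivide)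
  moreover have
    "((- b * b * sin (b * x) - a * b * cos (b * x)) + a * c * exp (a * (x0 - x))) / (a\<^sup>2 + b\<^sup>2)
      = - a * (((b * cos (b * x) - a * sin (b * x)) - c * exp (a * (x0 - x))) / (a\<^sup>2 + b\<^sup>2))
        - sin (b * x)"
    using D by (simp add: field_simps) (simp add: algebra_simps power2_eq_square)
  ultimately show ?thesis by (simp add: forced_sol_def c_def)
qed

section \<open>The function zsol and its first positive zero\<close>

lemma first_positive_zero:
  fixes f :: "real \<Rightarrow> real"
  assumes cont: "continuous_on UNIV f" and "0 < c" "c < d"
    and neg: "\<And>x. 0 < x \<Longrightarrow> x \<le> c \<Longrightarrow> f x < 0" and "0 < f d"
  defines "m \<equiv> Inf {x. 0 < x \<and> f x = 0}"
  shows "c < m" "m < d" "f m = 0" "\<And>x. 0 < x \<Longrightarrow> x < m \<Longrightarrow> f x < 0"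
proof -
  let ?S = "{x. 0 < x \<and> f x = 0}"
  have zero_between: "\<exists>z. c \<le> z \<and> z \<le> x \<and> f z = 0" if "c \<le> x" "0 \<le> f x" for x
    using IVT'[of f c 0 x] neg[of c] that \<open>0 < c\<close> continuous_on_subset[OF cont] by force
  obtain z where z: "c \<le> z" "z \<le> d" "f z = 0"
    using zero_between[of d] \<open>c < d\<close> \<open>0 < f d\<close> by auto
  have S_gt_c: "c < x" if "x \<in> ?S" for x
    using neg[of x] that by force
  have "?S = {x \<in> {c..}. f x = 0}"
    using S_gt_c \<open>0 < c\<close> by force
  then have "closed ?S"
    using continuous_closed_preimage_constant[OF continuous_on_subset[OF cont] closed_atLeast]
    by simp
  moreover have "z \<in> ?S" "bdd_below ?S"
    using z \<open>0 < c\<close> by (auto intro: bdd_belowI[of _ 0])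
  ultimately have m_in_S: "m \<in> ?S"
    unfolding m_def by (intro closed_contains_Inf) auto
  have m_le: "m \<le> x" if "x \<in> ?S" for x
    unfolding m_def using that \<open>bdd_below ?S\<close> by (rule cInf_lower)
  show "c < m" "f m = 0"
    using m_in_S S_gt_c by auto
  show "m < d"
    using m_le[of z] z \<open>0 < c\<close> \<open>f m = 0\<close> \<open>0 < f d\<close> by (cases "m = d") auto
  show "f x < 0" if x: "0 < x" "x < m" for x
  proof (rule ccontr)
    assume "\<not> f x < 0"
    then obtain z where "c \<le> z" "z \<le> x" "f z = 0"
      using zero_between[of x] neg[of x] x by force
    then show False
      using m_le[of z] x \<open>0 < c\<close> by auto
  qed
qed

lemma zsol_eq: "zsol a = forced_sol a (pi / 2) 0"
  unfolding zsol_def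
proof (rule the_equality)
  have deriv: "(forced_sol a (pi / 2) 0 has_real_derivative
      - a * forced_sol a (pi / 2) 0 x - sin (pi * x / 2)) (at x)" for x
    using forced_sol_has_derivative[of a "pi / 2" 0 x] by (simp add: mult.commute)
  then show "forced_sol a (pi / 2) 0 0 = 0 \<and> (\<forall>x. (forced_sol a (pi / 2) 0 has_real_derivative
      - a * forced_sol a (pi / 2) 0 x - sin (pi * x / 2)) (at x))"
    by simp
  fix z
  assume "z 0 = 0 \<and> (\<forall>x. (z has_real_derivative - a * z x - sin (pi * x / 2)) (at x))"
  then show "z = forced_sol a (pi / 2) 0"
    using linear_ode_unique[of z a "\<lambda>x. sin (pi * x / 2)", OF _ deriv, of 0] by simp
qed

lemma zsol_has_derivative: "(zsol a has_real_derivative - a * zsol a x - sin (pi * x / 2)) (at x)"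
  using forced_sol_has_derivative[of a "pi / 2" 0 x] by (simp add: zsol_eq mult.commute)

lemma zsol_0 [simp]: "zsol a 0 = 0"
  by (simp add: zsol_eq)

lemma continuous_on_zsol: "continuous_on S (zsol a)"
  by (meson DERIV_isCont zsol_has_derivative continuous_at_imp_continuous_on)

lemma zsol_neg_le_2:
  assumes "0 < x" "x \<le> 2"
  shows "zsol a x < 0"
proof -
  have "exp (a * x) * zsol a x < exp (a * 0) * zsol a 0"
  proof (rule integrating_factor_decreasing[OF \<open>0 < x\<close> zsol_has_derivative])
    fix t assume "0 < t" "t < x"
    then show "0 < sin (pi * t / 2)"
      using \<open>x \<le> 2\<close> by (intro sin_gt_zero) auto
  qed
  then show ?thesis by (simp add: mult_less_0_iff)
qed

lemma zsol_4_pos: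
  assumes "0 < a"
  shows "0 < zsol a 4"
proof -
  have "sin (2 * pi) = 0" "cos (2 * pi) = 1" by simp_all
  then have "zsol a 4 = pi / 2 * (1 - exp (- (a * 4))) / (a\<^sup>2 + (pi / 2)\<^sup>2)"
    by (simp add: zsol_eq forced_sol_def algebra_simps)
  also have "\<dots> > 0"
    using assms by (intro divide_pos_pos mult_pos_pos) (auto simp: add_pos_nonneg)
  finally show ?thesis .
qed

lemma
  assumes "0 < a"
  shows x_a_gt_2: "2 < x_a a" and x_a_lt_4: "x_a a < 4" and zsol_x_a: "zsol a (x_a a) = 0"
    and zsol_neg: "\<And>x. 0 < x \<Longrightarrow> x < x_a a \<Longrightarrow> zsol a x < 0"
  using first_positive_zero[OF continuous_on_zsol, of 2 4 a] zsol_neg_le_2 zsol_4_pos[OF assms]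
  unfolding x_a_def by auto

section \<open>Solutions of the switched system\<close>

(* On the switching line this selects the sliding velocity 0; it lies in rhs as soon as
   sin (pi x (1 + l / 2)) vanishes for some l in (-1, 1), i.e. for x > 2/3. *)
definition velocity :: "real \<Rightarrow> real \<Rightarrow> real \<Rightarrow> real" where
  "velocity a t y =
     (if 0 < y then - a * y - sin (3 * pi * t / 2)
      else if y < 0 then - a * y - sin (pi * t / 2) else 0)"

lemma velocity_in_rhs:
  assumes "2 / 3 < t"
  shows "velocity a t y \<in> rhs a t y"
proof (cases "y = 0")
  case True
  define k where "k = (if t < 2 then 1 else \<lfloor>t\<rfloor>)"
  define l where "l = 2 * of_int k / t - 2"
  have "t / 2 < of_int k" "of_int k < 3 * t / 2"
    using assms unfolding k_def by (simp_all; linarith)+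
  then have "-1 < l" "l < 1"
    using assms unfolding l_def by (simp_all add: field_simps)
  moreover have "pi * t * (1 + l / 2) = of_int k * pi"
    using assms by (simp add: l_def field_simps)
  then have "sin (pi * t * (1 + l / 2)) = 0"
    by (metis sin_zero_iff_int2)
  ultimately show ?thesis
    using True unfolding rhs_def velocity_def by (intro CollectI exI[of _ l]) auto
next
  case False
  then show ?thesis
    unfolding rhs_def velocity_def
    by (cases "0 < y") (auto intro!: exI[of _ "sgn y"] simp: ac_simps)
qed

lemma velocity_periodic: "velocity a (t + 4 * of_int k) y = velocity a t y"
proof -
  have sin_shift: "sin (x + 2 * pi * of_int n) = sin x" for x n
    by (simp add: sin_add)
  have "3 * pi * (t + 4 * of_int k) / 2 = 3 * pi * t / 2 + 2 * pi * of_int (3 * k)"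
    "pi * (t + 4 * of_int k) / 2 = pi * t / 2 + 2 * pi * of_int k"
    by (simp_all add: field_simps)
  then show ?thesis
    by (simp only: velocity_def sin_shift)
qed

lemma is_solutionI:
  assumes cont: "continuous_on {x0..} y"
    and fin: "\<And>X. finite (N \<inter> {x0..X})"
    and deriv: "\<And>t. x0 < t \<Longrightarrow> t \<notin> N \<Longrightarrow> (y has_real_derivative g t) (at t)"
    and field: "\<And>t. x0 \<le> t \<Longrightarrow> t \<notin> N \<Longrightarrow> g t \<in> rhs a t (y t)"
  shows "is_solution a x0 y"
  unfolding is_solution_def
proof (intro exI conjI allI impI ballI)
  have cover: "N \<inter> {x0..} = (\<Union>n. N \<inter> {x0..x0 + real n})"
  proof (intro equalityI subsetI)
    fix t assume "t \<in> N \<inter> {x0..}"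
    then have "t \<in> N \<inter> {x0..x0 + real (nat \<lceil>t - x0\<rceil>)}"
      by auto linarith
    then show "t \<in> (\<Union>n. N \<inter> {x0..x0 + real n})"
      by blast
  qed auto
  show "negligible (N \<inter> {x0..})"
    unfolding cover by (intro negligible_countable_Union) (auto intro: negligible_finite fin)
  show "g t \<in> rhs a t (y t)" if "t \<in> {x0..} - N \<inter> {x0..}" for t
    using that field by auto
  fix x assume "x0 \<le> x"
  have "(g has_integral y x - y x0) {x0..x}"
  proof (rule fundamental_theorem_of_calculus_interior_strong[OF fin \<open>x0 \<le> x\<close>])
    show "(y has_vector_derivative g t) (at t)" if "t \<in> {x0<..<x} - N \<inter> {x0..x}" for t
      using that deriv[of t] by (auto simp: has_real_derivative_iff_has_vector_derivative)
    show "continuous_on {x0..x} y"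
      using cont by (rule continuous_on_subset) auto
  qed
  then show "g integrable_on {x0..x}" "y x = y x0 + integral {x0..x} g"
    by (auto simp: integral_unique has_integral_integrable)
qed

lemma finite_arith_progression_Icc:
  fixes p c lo hi :: real
  assumes "0 < p"
  shows "finite (range (\<lambda>k::int. p * of_int k + c) \<inter> {lo..hi})"
proof (rule finite_subset)
  show "range (\<lambda>k::int. p * of_int k + c) \<inter> {lo..hi}
      \<subseteq> (\<lambda>k. p * of_int k + c) ` {\<lfloor>(lo - c) / p\<rfloor>..\<lceil>(hi - c) / p\<rceil>}"
  proof
    fix t assume "t \<in> range (\<lambda>k::int. p * of_int k + c) \<inter> {lo..hi}"
    then obtain k where t: "t = p * of_int k + c" "lo \<le> t" "t \<le> hi"
      by auto
    then have "(lo - c) / p \<le> of_int k" "of_int k \<le> (hi - c) / p"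
      using assms by (simp_all add: field_simps)
    then have "k \<in> {\<lfloor>(lo - c) / p\<rfloor>..\<lceil>(hi - c) / p\<rceil>}"
      by (simp add: floor_le_iff le_ceiling_iff)
    then show "t \<in> (\<lambda>k. p * of_int k + c) ` {\<lfloor>(lo - c) / p\<rfloor>..\<lceil>(hi - c) / p\<rceil>}"
      using t by blast
  qed
qed simp

section \<open>Periodic extensions\<close>

definition periodic_ext :: "real \<Rightarrow> (real \<Rightarrow> 'a) \<Rightarrow> real \<Rightarrow> 'a" where
  "periodic_ext p P x = P (x - p * of_int \<lfloor>x / p\<rfloor>)"

lemma periodic_ext_eq_shift:
  assumes "0 < p" "p * of_int k \<le> x" "x < p * of_int k + p"
  shows "periodic_ext p P x = P (x - p * of_int k)"
proof -
  have "\<lfloor>x / p\<rfloor> = k"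
    using assms by (intro floor_unique) (simp_all add: field_simps)
  then show ?thesis by (simp add: periodic_ext_def)
qed

lemma periodic_ext_eq_shift_closed:
  assumes "0 < p" "P p = P 0" "p * of_int k \<le> x" "x \<le> p * of_int k + p"
  shows "periodic_ext p P x = P (x - p * of_int k)"
proof (cases "x < p * of_int k + p")
  case True
  then show ?thesis using assms periodic_ext_eq_shift by blast
next
  case False
  then have "x = p * of_int (k + 1)" using assms by (simp add: algebra_simps)
  then show ?thesis using assms periodic_ext_eq_shift[of p "k + 1" x P] by (simp add: algebra_simps)
qed

lemma isCont_periodic_ext:
  fixes P :: "real \<Rightarrow> 'a::topological_space"
  assumes "0 < p" "continuous_on {0..p} P" "P p = P 0"
  shows "isCont (periodic_ext p P) x"
proof -
  define k where "k = \<lfloor>x / p\<rfloor>"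
  have "of_int k \<le> x / p" "x / p < of_int k + 1"
    unfolding k_def by linarith+
  then have x: "p * of_int k \<le> x" "x < p * of_int k + p"
    using assms(1) by (simp_all add: field_simps)
  have piece: "continuous_on {p * of_int j..p * of_int j + p} (periodic_ext p P)" for j
  proof (rule continuous_on_eq)
    show "continuous_on {p * of_int j..p * of_int j + p} (\<lambda>s. P (s - p * of_int j))"
      by (rule continuous_on_compose2[OF assms(2)]) (auto intro!: continuous_intros)
    show "P (s - p * of_int j) = periodic_ext p P s" if "s \<in> {p * of_int j..p * of_int j + p}" for s
      using that periodic_ext_eq_shift_closed[OF assms(1,3), of j s] by simp
  qed
  have "continuous_on ({p * of_int (k - 1)..p * of_int k} \<union> {p * of_int k..p * of_int k + p})
      (periodic_ext p P)"
    using piece[of "k - 1"] piece[of k] by (intro continuous_on_closed_Un) (simp_all add: algebra_simps)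
  moreover have "{p * of_int (k - 1)..p * of_int k} \<union> {p * of_int k..p * of_int k + p}
      = {p * of_int k - p..p * of_int k + p}"
    using assms(1) by (auto simp: algebra_simps)
  moreover have "x \<in> interior {p * of_int k - p..p * of_int k + p}"
    using x assms(1) by simp
  ultimately show ?thesis
    by (metis continuous_on_interior)
qed

lemma periodic_ext_has_derivative:
  assumes "0 < p" "0 < r" "r < p" "(P has_real_derivative D) (at r)"
  shows "(periodic_ext p P has_real_derivative D) (at (r + p * of_int k))"
proof (rule has_field_derivative_transform_within_open)
  show "((\<lambda>s. P (s + - (p * of_int k))) has_real_derivative D) (at (r + p * of_int k))"
    using assms(4) DERIV_shift[of P D "r + p * of_int k" "- (p * of_int k)"] by simp
  show "open {p * of_int k<..<p * of_int k + p}"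
    "r + p * of_int k \<in> {p * of_int k<..<p * of_int k + p}"
    using assms by auto
  show "P (s + - (p * of_int k)) = periodic_ext p P s"
    if "s \<in> {p * of_int k<..<p * of_int k + p}" for s
    using that assms(1) periodic_ext_eq_shift[of p k s P] by simp
qed

section \<open>The sliding periodic solution y_d\<close>

definition y_d_profile :: "real \<Rightarrow> real \<Rightarrow> real" where
  "y_d_profile a r = (if r < x_a a then zsol a r else 0)"

lemma y_d_eq_periodic_ext: "y_d a = periodic_ext 4 (y_d_profile a)"
  by (simp add: fun_eq_iff y_d_def periodic_ext_def y_d_profile_def Let_def)

lemma y_d_profile_nonpos:
  assumes "0 < a" "0 \<le> r"
  shows "y_d_profile a r \<le> 0"
  using assms zsol_neg[OF \<open>0 < a\<close>, of r] by (cases "r = 0") (auto simp: y_d_profile_def)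

lemma continuous_on_y_d_profile:
  assumes "0 < a"
  shows "continuous_on UNIV (y_d_profile a)"
proof -
  have "continuous_on {..x_a a} (y_d_profile a)"
    by (rule continuous_on_eq[OF continuous_on_zsol])
       (auto simp: y_d_profile_def zsol_x_a[OF assms])
  moreover have "continuous_on {x_a a..} (y_d_profile a)"
    by (rule continuous_on_eq[OF continuous_on_const]) (auto simp: y_d_profile_def)
  ultimately have "continuous_on ({..x_a a} \<union> {x_a a..}) (y_d_profile a)"
    by (intro continuous_on_closed_Un) auto
  moreover have "{..x_a a} \<union> {x_a a..} = UNIV"
    by auto
  ultimately show ?thesis by simp
qed

lemma y_d_profile_has_derivative:
  assumes "0 < a" "0 < r" "r \<noteq> x_a a"
  shows "(y_d_profile a has_real_derivative velocity a r (y_d_profile a r)) (at r)"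
proof (cases "r < x_a a")
  case True
  have "(y_d_profile a has_real_derivative - a * zsol a r - sin (pi * r / 2)) (at r)"
    by (rule has_field_derivative_transform_within_open[OF zsol_has_derivative, of "{..<x_a a}"])
       (use True in \<open>auto simp: y_d_profile_def\<close>)
  moreover have "zsol a r < 0"
    using zsol_neg[OF assms(1,2) True] .
  ultimately show ?thesis
    using True by (simp add: velocity_def y_d_profile_def)
next
  case False
  then have "x_a a < r" using assms(3) by simp
  have "(y_d_profile a has_real_derivative 0) (at r)"
    by (rule has_field_derivative_transform_within_open[of "\<lambda>_. 0" 0 r "{x_a a<..}"])
       (use \<open>x_a a < r\<close> in \<open>auto simp: y_d_profile_def\<close>)
  then show ?thesis
    using False by (simp add: velocity_def y_d_profile_def)
qed

lemma y_d_nonpos: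
  assumes "0 < a"
  shows "y_d a x \<le> 0"
proof -
  have "0 \<le> x - 4 * of_int \<lfloor>x / 4\<rfloor>"
    by linarith
  then show ?thesis
    using y_d_profile_nonpos[OF assms] by (simp add: y_d_eq_periodic_ext periodic_ext_def)
qed

lemma y_d_multiple_4:
  assumes "0 < a"
  shows "y_d a (4 * of_int k) = 0"
  using periodic_ext_eq_shift[of 4 k "4 * of_int k" "y_d_profile a"] x_a_gt_2[OF assms]
  by (simp add: y_d_eq_periodic_ext y_d_profile_def)

lemma isCont_y_d:
  assumes "0 < a"
  shows "isCont (y_d a) x"
  unfolding y_d_eq_periodic_ext
proof (rule isCont_periodic_ext)
  show "continuous_on {0..4} (y_d_profile a)"
    using continuous_on_y_d_profile[OF assms] by (rule continuous_on_subset) simp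
  show "y_d_profile a 4 = y_d_profile a 0"
    using x_a_gt_2[OF assms] x_a_lt_4[OF assms] by (simp add: y_d_profile_def)
qed simp

lemma y_d_has_derivative:
  assumes "0 < a" and "t \<notin> range (\<lambda>k. 4 * of_int k)"
    and "t \<notin> range (\<lambda>k. 4 * of_int k + x_a a)"
  shows "(y_d a has_real_derivative velocity a t (y_d a t)) (at t)"
proof -
  define k where "k = \<lfloor>t / 4\<rfloor>"
  define r where "r = t - 4 * of_int k"
  have t: "t = r + 4 * of_int k"
    by (simp add: r_def)
  have "0 \<le> r" "r < 4"
    unfolding r_def k_def by linarith+
  moreover have "r \<noteq> 0" "r \<noteq> x_a a"
  proof -
    have "t \<noteq> 4 * of_int k" "t \<noteq> 4 * of_int k + x_a a"
      using assms(2,3) by blast+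
    then show "r \<noteq> 0" "r \<noteq> x_a a"
      unfolding r_def by auto
  qed
  ultimately have "(periodic_ext 4 (y_d_profile a) has_real_derivative
      velocity a r (y_d_profile a r)) (at (r + 4 * of_int k))"
    by (intro periodic_ext_has_derivative y_d_profile_has_derivative[OF assms(1)]) auto
  moreover have "y_d a t = y_d_profile a r"
    by (simp add: y_d_eq_periodic_ext periodic_ext_def r_def k_def)
  ultimately show ?thesis
    unfolding t by (simp add: y_d_eq_periodic_ext velocity_periodic)
qed

section \<open>A solution entering the sliding region from above\<close>

definition y_land :: "real \<Rightarrow> real \<Rightarrow> real" where
  "y_land a x = (if x < 3 then forced_sol a (3 * pi / 2) 3 x else if x < 4 then 0 else y_d a x)"

lemma forced_sol_3_has_derivative:
  "(forced_sol a (3 * pi / 2) 3 has_real_derivative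
     - a * forced_sol a (3 * pi / 2) 3 x - sin (3 * pi * x / 2)) (at x)"
  using forced_sol_has_derivative[of a "3 * pi / 2" 3 x] by simp

lemma y_land_pos:
  assumes "8 / 3 \<le> x" "x < 3"
  shows "0 < y_land a x"
proof -
  have "exp (a * 3) * forced_sol a (3 * pi / 2) 3 3 < exp (a * x) * forced_sol a (3 * pi / 2) 3 x"
  proof (rule integrating_factor_decreasing[OF \<open>x < 3\<close> forced_sol_3_has_derivative])
    fix t assume t: "x < t" "t < 3"
    have "3 * pi * t / 2 = pi * (3 * t / 2 - 4) + 2 * pi + 2 * pi"
      by (simp add: field_simps)
    moreover have "0 < sin (pi * (3 * t / 2 - 4))"
      using t assms by (intro sin_gt_zero) auto
    ultimately show "0 < sin (3 * pi * t / 2)"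
      by (simp only: sin_periodic)
  qed
  then show ?thesis
    using assms by (simp add: y_land_def zero_less_mult_iff)
qed

lemma y_land_3 [simp]: "y_land a 3 = 0"
  by (simp add: y_land_def)

lemma y_land_eq_y_d: "4 \<le> x \<Longrightarrow> y_land a x = y_d a x"
  by (simp add: y_land_def)

lemma y_land_nonpos:
  assumes "0 < a" "3 \<le> x"
  shows "y_land a x \<le> 0"
  using assms y_d_nonpos[OF assms(1)] by (simp add: y_land_def)

lemma continuous_on_y_land:
  assumes "0 < a"
  shows "continuous_on UNIV (y_land a)"
proof -
  have "continuous_on {..3} (y_land a)"
    by (rule continuous_on_eq[of _ "forced_sol a (3 * pi / 2) 3"])
       (auto simp: y_land_def
         intro: DERIV_isCont[OF forced_sol_3_has_derivative] continuous_at_imp_continuous_on)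
  moreover have "continuous_on {3..4} (y_land a)"
    by (rule continuous_on_eq[OF continuous_on_const])
       (use y_d_multiple_4[OF assms, of 1] in \<open>auto simp: y_land_def\<close>)
  moreover have "continuous_on {4..} (y_land a)"
    by (rule continuous_on_eq[of _ "y_d a"])
       (auto simp: y_land_eq_y_d intro: isCont_y_d[OF assms] continuous_at_imp_continuous_on)
  ultimately have "continuous_on ({..3} \<union> {3..4} \<union> {4..}) (y_land a)"
    by (intro continuous_on_closed_Un) auto
  moreover have "{..3} \<union> {3..4} \<union> {4..} = (UNIV :: real set)"
    by auto
  ultimately show ?thesis by simp
qed

(* The multiples of 4 are included only for convenience: y_land is differentiable there. *)
definition landing_kinks :: "real \<Rightarrow> real set" where
  "landing_kinks a = {3} \<union> range (\<lambda>k. 4 * of_int k) \<union> range (\<lambda>k. 4 * of_int k + x_a a)"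

lemma y_land_has_derivative:
  assumes "0 < a" "8 / 3 < t" "t \<notin> landing_kinks a"
  shows "(y_land a has_real_derivative velocity a t (y_land a t)) (at t)"
proof -
  have kinks: "t \<noteq> 3" "t \<notin> range (\<lambda>k. 4 * of_int k)" "t \<notin> range (\<lambda>k. 4 * of_int k + x_a a)"
    using assms(3) unfolding landing_kinks_def by blast+
  have "(4::real) \<in> range (\<lambda>k. 4 * of_int k)"
    by (rule range_eqI[of _ _ 1]) simp
  then have "t \<noteq> 4"
    using kinks(2) by blast
  then consider "t < 3" | "3 < t" "t < 4" | "4 < t"
    using kinks(1) by linarith
  then show ?thesis
  proof cases
    case 1
    have "(y_land a has_real_derivative
        - a * forced_sol a (3 * pi / 2) 3 t - sin (3 * pi * t / 2)) (at t)"
      by (rule has_field_derivative_transform_within_open[OF forced_sol_3_has_derivative, of "{..<3}"])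
         (use 1 in \<open>auto simp: y_land_def\<close>)
    moreover have "0 < y_land a t"
      using 1 assms(2) by (intro y_land_pos) auto
    ultimately show ?thesis
      using 1 by (simp add: velocity_def y_land_def)
  next
    case 2
    have "(y_land a has_real_derivative 0) (at t)"
      by (rule has_field_derivative_transform_within_open[of "\<lambda>_. 0" 0 t "{3<..<4}"])
         (use 2 in \<open>auto simp: y_land_def\<close>)
    then show ?thesis
      using 2 by (simp add: velocity_def y_land_def)
  next
    case 3
    have "(y_d a has_real_derivative velocity a t (y_land a t)) (at t)"
      using y_d_has_derivative[OF assms(1) kinks(2,3)] 3 by (simp add: y_land_eq_y_d)
    then show ?thesis
      by (rule has_field_derivative_transform_within_open[of _ _ t "{4<..}"])
         (use 3 in \<open>auto simp: y_land_eq_y_d\<close>)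
  qed
qed

lemma is_solution_y_land:
  assumes "0 < a"
  shows "is_solution a (8 / 3) (y_land a)"
proof (rule is_solutionI)
  show "continuous_on {8 / 3..} (y_land a)"
    using continuous_on_y_land[OF assms] by (rule continuous_on_subset) simp
  show "finite (landing_kinks a \<inter> {8 / 3..X})" for X
    using finite_arith_progression_Icc[of 4 0 "8 / 3" X]
      finite_arith_progression_Icc[of 4 "x_a a" "8 / 3" X]
    by (simp add: landing_kinks_def Int_Un_distrib2 Int_insert_left)
  show "(y_land a has_real_derivative velocity a t (y_land a t)) (at t)"
    if "8 / 3 < t" "t \<notin> landing_kinks a" for t
    using y_land_has_derivative[OF assms that] .
  show "velocity a t (y_land a t) \<in> rhs a t (y_land a t)" if "8 / 3 \<le> t" for t
    using that by (intro velocity_in_rhs) simp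
qed

theorem proposition3:
  fixes a :: real
  assumes "a > 0"
  shows "\<exists>x0 y. x0 \<ge> 0 \<and> y x0 > 0 \<and> is_solution a x0 y \<and>
           (\<exists>xT. xT > x0 \<and> y xT = 0 \<and> (\<forall>x\<in>{x0..<xT}. y x \<noteq> 0) \<and>
                 (\<forall>x>xT. y x \<le> 0)) \<and>
           (\<exists>n::nat. \<forall>x\<ge>4 * real n. y x = y_d a x)"
proof (intro exI conjI)
  show "is_solution a (8 / 3) (y_land a)"
    using is_solution_y_land[OF assms] .
  show "0 < y_land a (8 / 3)" "\<forall>x\<in>{8 / 3..<3}. y_land a x \<noteq> 0"
    using y_land_pos by (auto simp: less_imp_neq[symmetric])
  show "\<forall>x>3. y_land a x \<le> 0"
    using y_land_nonpos[OF assms] by simp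
  show "\<forall>x\<ge>4 * real 1. y_land a x = y_d a x"
    using y_land_eq_y_d by simp
qed auto

end
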